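(* Let $y\in\mathbb{R}^n$, $F\in\mathbb{R}^n$, $Z\in\mathbb{R}^{n\times m}$, and let $\theta=(\theta_1,\dots,\theta_q)^T$ with $\theta_1=\sigma^2>0$, where $\Sigma=\Sigma(\theta_2,\dots,\theta_q)\in\mathbb{R}^{m\times m}$ is a covariance matrix depending differentiably on $\theta_2,\dots,\theta_q$ (and not on $\sigma^2$). Put $C=Z\Sigma Z^T+\sigma^2I_n$. For each $i=1,\dots,n$ let $N(i)\subseteq\{1,\dots,i-1\}$ be a conditioning set, and define $$A_i=\left(Z\Sigma Z^T\right)_{i,N(i)}\left(C_{N(i)}\right)^{-1}\in\mathbb{R}^{1\times|N(i)|},\qquad D_i=C_{i,i}-A_i\left(Z\Sigma Z^T\right)_{N(i),i}.$$ Let $B$ be the $n\times n$ lower triangular matrix with ones on the diagonal, $(B)_{i,N(i)}=-A_i$, and zeros elsewhere, and let $D=\mathrm{diag}(D_1,\dots,D_n)$. Let $$\tilde L(y,F,\theta)=\frac12(y-F)^TB^TD^{-1}B(y-F)+\frac12\sum_{i=1}^n\log D_i+\frac n2\log(2\pi)$$ be the negative log-likelihood of $y\sim\mathcal{N}(F,B^{-1}DB^{-T})$. Then for $1\le k\le q$, $$\frac{\partial \tilde L(y,F,\theta)}{\partial\theta_k}=\frac12\left(2u_k^Tu-u^T\frac{\partial D}{\partial\theta_k}u\right)+\frac12\sum_{i=1}^n\frac1{D_i}\frac{\partial D_i}{\partial\theta_k},$$ where $u=D^{-1}B(y-F)$, $u_k=\frac{\partial B}{\partial\theta_k}(y-F)$,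 and $\frac{\partial B}{\partial\theta_k}$ is lower triangular and $\frac{\partial D}{\partial\theta_k}$ diagonal, with non-zero entries given, for $1<k\le q$, by $$\left(\frac{\partial B}{\partial\theta_k}\right)_{i,N(i)}=-\frac{\partial A_i}{\partial\theta_k}=-\left(Z\frac{\partial\Sigma}{\partial\theta_k}Z^T\right)_{i,N(i)}\left(C_{N(i)}\right)^{-1}+\left(Z\Sigma Z^T\right)_{i,N(i)}\left(C_{N(i)}\right)^{-1}\left(Z\frac{\partial\Sigma}{\partial\theta_k}Z^T\right)_{N(i)}\left(C_{N(i)}\right)^{-1},$$ $$\frac{\partial D_i}{\partial\theta_k}=\left(Z\frac{\partial\Sigma}{\partial\theta_k}Z^T\right)_{i,i}-\frac{\partial A_i}{\partial\theta_k}\left(Z\Sigma Z^T\right)_{N(i),i}-A_i\left(Z\frac{\partial\Sigma}{\partial\theta_k}Z^T\right)_{N(i),i},$$ and, for $k=1$ (i.e. $\theta_1=\sigma^2$), by $$\left(\frac{\partial B}{\partial\sigma^2}\right)_{i,N(i)}=\left(Z\Sigma Z^T\right)_{i,N(i)}\left(C_{N(i)}\right)^{-2},\qquad \frac{\partial D_i}{\partial\sigma^2}=1-\frac{\partial A_i}{\partial\sigma^2}\left(Z\Sigma Z^T\right)_{N(i),i}.$$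
   Context: For a matrix $M$ and index set $N(i)$, $M_{i,N(i)}$ denotes the submatrix with row $i$ and columns $N(i)$, $M_{N(i),i}$ the submatrix with rows $N(i)$ and column $i$, and $M_{N(i)}$ the submatrix with rows and columns $N(i)$. The matrices $B,D$ define the Vecchia approximation $y\approx\mathcal{N}(F,B^{-1}DB^{-T})$ of the Gaussian model $y=F+Zb+\epsilon$, $b\sim\mathcal{N}(0,\Sigma)$, $\epsilon\sim\mathcal{N}(0,\sigma^2I_n)$, obtained by replacing $p(y_i\mid y_1,\dots,y_{i-1})$ by $p(y_i\mid y_{N(i)})$ (in the paper $N(i)$ are nearest-neighbor sets, e.g. the indices of the nearest neighbors of location $s_i$ among $s_1,\dots,s_{i-1}$). Derivatives with respect to $\sigma^2$ are taken with $\Sigma$ held fixed. *)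

theory Defs
  imports "HOL-Analysis.Analysis" "Jordan_Normal_Form.Gauss_Jordan_Elimination"
    "Jordan_Normal_Form.DL_Submatrix"
begin

text \<open>Indices of rows/columns are 0-based (JNF convention); parameters theta are
  1-based: theta 1 = sigma^2, theta 2 .. theta q parametrise Sigma.\<close>

definition minv :: "real mat \<Rightarrow> real mat" where
  "minv M = the (mat_inverse M)"

definition Gm :: "real mat \<Rightarrow> real mat \<Rightarrow> real mat" where
  "Gm Z S = Z * S * transpose_mat Z"

definition Cm :: "real mat \<Rightarrow> real mat \<Rightarrow> real \<Rightarrow> real mat" where
  "Cm Z S s = Gm Z S + s \<cdot>\<^sub>m 1\<^sub>m (dim_row Z)"

definition CNinv :: "real mat \<Rightarrow> real mat \<Rightarrow> real \<Rightarrow> (nat \<Rightarrow> nat set) \<Rightarrow> nat \<Rightarrow> real mat" where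
  "CNinv Z S s N i = minv (submatrix (Cm Z S s) (N i) (N i))"

definition Avec :: "real mat \<Rightarrow> real mat \<Rightarrow> real \<Rightarrow> (nat \<Rightarrow> nat set) \<Rightarrow> nat \<Rightarrow> real mat" where
  "Avec Z S s N i = submatrix (Gm Z S) {i} (N i) * CNinv Z S s N i"

definition Dsc :: "real mat \<Rightarrow> real mat \<Rightarrow> real \<Rightarrow> (nat \<Rightarrow> nat set) \<Rightarrow> nat \<Rightarrow> real" where
  "Dsc Z S s N i = Cm Z S s $$ (i,i) - (Avec Z S s N i * submatrix (Gm Z S) (N i) {i}) $$ (0,0)"

text \<open>position of column j within N(i) (submatrix orders indices increasingly)\<close>
definition posN :: "(nat \<Rightarrow> nat set) \<Rightarrow> nat \<Rightarrow> nat \<Rightarrow> nat" where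
  "posN N i j = card {j' \<in> N i. j' < j}"

definition scatter :: "nat \<Rightarrow> (nat \<Rightarrow> nat set) \<Rightarrow> (nat \<Rightarrow> real mat) \<Rightarrow> real mat" where
  "scatter n N R = mat n n (\<lambda>(i,j). if j \<in> N i then R i $$ (0, posN N i j) else 0)"

definition Bm :: "real mat \<Rightarrow> real mat \<Rightarrow> real \<Rightarrow> (nat \<Rightarrow> nat set) \<Rightarrow> real mat" where
  "Bm Z S s N = mat (dim_row Z) (dim_row Z) (\<lambda>(i,j). if i = j then 1
      else if j \<in> N i then - (Avec Z S s N i $$ (0, posN N i j)) else 0)"

definition Dm :: "real mat \<Rightarrow> real mat \<Rightarrow> real \<Rightarrow> (nat \<Rightarrow> nat set) \<Rightarrow> real mat" where
  "Dm Z S s N = mat_diag (dim_row Z) (Dsc Z S s N)"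

definition Ltilde :: "real vec \<Rightarrow> real vec \<Rightarrow> real mat \<Rightarrow> real mat \<Rightarrow> real \<Rightarrow> (nat \<Rightarrow> nat set) \<Rightarrow> real" where
  "Ltilde y F Z S s N =
    (let n = dim_row Z; r = y - F; B = Bm Z S s N; D = Dm Z S s N in
      1/2 * (r \<bullet> ((transpose_mat B * minv D * B) *\<^sub>v r))
      + 1/2 * (\<Sum>i<n. ln (Dsc Z S s N i)) + real n / 2 * ln (2 * pi))"

text \<open>Derivatives w.r.t. theta_k, k > 1; H = dSigma/dtheta_k.\<close>
definition dA_theta :: "real mat \<Rightarrow> real mat \<Rightarrow> real \<Rightarrow> (nat \<Rightarrow> nat set) \<Rightarrow> real mat \<Rightarrow> nat \<Rightarrow> real mat" where
  "dA_theta Z S s N H i =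
     submatrix (Z * H * transpose_mat Z) {i} (N i) * CNinv Z S s N i
     - submatrix (Gm Z S) {i} (N i) * CNinv Z S s N i
         * submatrix (Z * H * transpose_mat Z) (N i) (N i) * CNinv Z S s N i"

definition dD_theta :: "real mat \<Rightarrow> real mat \<Rightarrow> real \<Rightarrow> (nat \<Rightarrow> nat set) \<Rightarrow> real mat \<Rightarrow> nat \<Rightarrow> real" where
  "dD_theta Z S s N H i =
     (Z * H * transpose_mat Z) $$ (i,i)
     - (dA_theta Z S s N H i * submatrix (Gm Z S) (N i) {i}) $$ (0,0)
     - (Avec Z S s N i * submatrix (Z * H * transpose_mat Z) (N i) {i}) $$ (0,0)"

definition dB_sigma_row :: "real mat \<Rightarrow> real mat \<Rightarrow> real \<Rightarrow> (nat \<Rightarrow> nat set) \<Rightarrow> nat \<Rightarrow> real mat" where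
  "dB_sigma_row Z S s N i = submatrix (Gm Z S) {i} (N i) * (CNinv Z S s N i ^\<^sub>m 2)"

definition dA_sigma :: "real mat \<Rightarrow> real mat \<Rightarrow> real \<Rightarrow> (nat \<Rightarrow> nat set) \<Rightarrow> nat \<Rightarrow> real mat" where
  "dA_sigma Z S s N i = - dB_sigma_row Z S s N i"

definition dD_sigma :: "real mat \<Rightarrow> real mat \<Rightarrow> real \<Rightarrow> (nat \<Rightarrow> nat set) \<Rightarrow> nat \<Rightarrow> real" where
  "dD_sigma Z S s N i = 1 - (dA_sigma Z S s N i * submatrix (Gm Z S) (N i) {i}) $$ (0,0)"

text \<open>dB/dtheta_k and dD/dtheta_k (k = 1 is sigma^2; dS k = dSigma/dtheta_k for k > 1).\<close>
definition dBm :: "real mat \<Rightarrow> real mat \<Rightarrow> real \<Rightarrow> (nat \<Rightarrow> nat set) \<Rightarrow> (nat \<Rightarrow> real mat) \<Rightarrow> nat \<Rightarrow> real mat" where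
  "dBm Z S s N dS k = (if k = 1 then scatter (dim_row Z) N (dB_sigma_row Z S s N)
     else scatter (dim_row Z) N (\<lambda>i. - dA_theta Z S s N (dS k) i))"

definition dDi :: "real mat \<Rightarrow> real mat \<Rightarrow> real \<Rightarrow> (nat \<Rightarrow> nat set) \<Rightarrow> (nat \<Rightarrow> real mat) \<Rightarrow> nat \<Rightarrow> nat \<Rightarrow> real" where
  "dDi Z S s N dS k i = (if k = 1 then dD_sigma Z S s N i else dD_theta Z S s N (dS k) i)"

definition dDm :: "real mat \<Rightarrow> real mat \<Rightarrow> real \<Rightarrow> (nat \<Rightarrow> nat set) \<Rightarrow> (nat \<Rightarrow> real mat) \<Rightarrow> nat \<Rightarrow> real mat" where
  "dDm Z S s N dS k = mat_diag (dim_row Z) (dDi Z S s N dS k)"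

definition gradL :: "real vec \<Rightarrow> real vec \<Rightarrow> real mat \<Rightarrow> real mat \<Rightarrow> real \<Rightarrow> (nat \<Rightarrow> nat set) \<Rightarrow> (nat \<Rightarrow> real mat) \<Rightarrow> nat \<Rightarrow> real" where
  "gradL y F Z S s N dS k =
    (let r = y - F;
         u = minv (Dm Z S s N) *\<^sub>v (Bm Z S s N *\<^sub>v r);
         uk = dBm Z S s N dS k *\<^sub>v r in
      1/2 * (2 * (uk \<bullet> u) - u \<bullet> (dDm Z S s N dS k *\<^sub>v u))
      + 1/2 * (\<Sum>i<dim_row Z. 1 / Dsc Z S s N i * dDi Z S s N dS k i))"

end

theory Submission
  imports Defs "Jordan_Normal_Form.Determinant"
begin

(* As Sigma is positive semidefinite, v^T C v >= sigma^2 |v|^2,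
   so every principal block C_{N(i)} is invertible and D_i, the Schur complement of C_{N(i)} in the
   block of C indexed by N(i) and i, is positive. Hence A_i, B, D and the likelihood are
   differentiable, and the product rule together with d(M^-1) = - M^-1 dM M^-1 yields the formulas
   for dA_i and dD_i. The partial derivative in theta_k is the derivative along the path t ->
   (Sigma, sigma^2)(theta(k := t)), whose velocity is (dSigma/dtheta_k, 0) for k > 1 and (0, 1) for
   k = 1. Finally, D being diagonal, the quadratic part of the likelihood is sum_i (B r)_i^2 / D_i,
   and differentiating it termwise gives 2 u_k^T u - u^T dD u. *)

lemma DERIV_transform_nhds:
  "DERIV g x :> v \<Longrightarrow> \<forall>\<^sub>F t in nhds x. f t = g t \<Longrightarrow> u = v \<Longrightarrow> DERIV f x :> u"
  using DERIV_cong_ev[of x x f g u v] by blast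

lemma differentiable_transform_nhds:
  fixes f g :: "real \<Rightarrow> real"
  assumes "g differentiable (at x)" and "\<forall>\<^sub>F t in nhds x. f t = g t"
  shows "f differentiable (at x)"
  using assms DERIV_transform_nhds unfolding real_differentiable_def by blast

lemma differentiable_prod:
  fixes f :: "'i \<Rightarrow> real \<Rightarrow> real"
  shows "finite S \<Longrightarrow> (\<And>i. i \<in> S \<Longrightarrow> f i differentiable (at x)) \<Longrightarrow>
    (\<lambda>t. \<Prod>i\<in>S. f i t) differentiable (at x)"
  by (induction S rule: finite_induct) auto

lemma pick_less:
  assumes "I \<subseteq> {..<n}" and "a < card I"
  shows "pick I a \<in> I" and "pick I a < n"
  using pick_in_set_le[OF assms(2)] assms(1) by auto

lemma pick_singleton [simp]: "pick {i} 0 = i"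
  using pick_in_set_le[of 0 "{i}"] by (simp del: pick.simps)

lemma submatrix_carrier_mat:
  assumes "A \<in> carrier_mat nr nc" and "I \<subseteq> {..<nr}" and "J \<subseteq> {..<nc}"
  shows "submatrix A I J \<in> carrier_mat (card I) (card J)"
proof -
  have "{i. i < nr \<and> i \<in> I} = I" "{j. j < nc \<and> j \<in> J} = J" using assms(2,3) by auto
  moreover have "dim_row A = nr" "dim_col A = nc" using assms(1) by auto
  ultimately show ?thesis by (intro carrier_matI) (simp_all add: dim_submatrix)
qed

lemma submatrix_index_pick:
  assumes "A \<in> carrier_mat nr nc" and "I \<subseteq> {..<nr}" and "J \<subseteq> {..<nc}"
    and "a < card I" and "b < card J"
  shows "submatrix A I J $$ (a,b) = A $$ (pick I a, pick J b)"
proof -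
  have "{i. i < nr \<and> i \<in> I} = I" "{j. j < nc \<and> j \<in> J} = J" using assms(2,3) by auto
  then show ?thesis using assms(1,4,5) by (intro submatrix_index) auto
qed

lemma submatrix_zero_mat:
  assumes "I \<subseteq> {..<nr}" and "J \<subseteq> {..<nc}"
  shows "submatrix (0\<^sub>m nr nc) I J = (0\<^sub>m (card I) (card J) :: 'a :: zero mat)"
  using assms submatrix_carrier_mat[OF zero_carrier_mat assms]
  by (intro eq_matI) (auto simp: submatrix_index_pick[OF zero_carrier_mat assms] pick_less)

lemma submatrix_one_mat:
  assumes I: "I \<subseteq> {..<n}"
  shows "submatrix (1\<^sub>m n) I I = (1\<^sub>m (card I) :: 'a :: {zero,one} mat)"
proof (rule eq_matI)
  fix a b assume "a < dim_row (1\<^sub>m (card I) :: 'a mat)" "b < dim_col (1\<^sub>m (card I) :: 'a mat)"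
  then have ab: "a < card I" "b < card I" by auto
  have "pick I a = pick I b \<longleftrightarrow> a = b"
    using card_pick_le[OF ab(1)] card_pick_le[OF ab(2)] by metis
  then show "submatrix (1\<^sub>m n) I I $$ (a,b) = (1\<^sub>m (card I) :: 'a mat) $$ (a,b)"
    using ab pick_less[OF I] by (simp add: submatrix_index_pick[OF one_carrier_mat I I ab])
qed (use submatrix_carrier_mat[OF one_carrier_mat I I] in auto)

section \<open>Entrywise derivatives of matrix-valued functions\<close>

definition has_mat_derivative :: "(real \<Rightarrow> real mat) \<Rightarrow> real mat \<Rightarrow> real \<Rightarrow> nat \<Rightarrow> nat \<Rightarrow> bool" where
  "has_mat_derivative f f' x nr nc \<longleftrightarrow>
     f' \<in> carrier_mat nr nc \<and> (\<forall>\<^sub>F t in nhds x. f t \<in> carrier_mat nr nc) \<and>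
     (\<forall>a<nr. \<forall>b<nc. ((\<lambda>t. f t $$ (a,b)) has_real_derivative f' $$ (a,b)) (at x))"

lemma has_mat_derivativeD:
  assumes "has_mat_derivative f f' x nr nc"
  shows "f' \<in> carrier_mat nr nc" and "\<forall>\<^sub>F t in nhds x. f t \<in> carrier_mat nr nc"
    and "f x \<in> carrier_mat nr nc"
    and "a < nr \<Longrightarrow> b < nc \<Longrightarrow> ((\<lambda>t. f t $$ (a,b)) has_real_derivative f' $$ (a,b)) (at x)"
  using assms eventually_nhds_x_imp_x unfolding has_mat_derivative_def by blast+

lemma has_mat_derivative_const: "A \<in> carrier_mat nr nc \<Longrightarrow> has_mat_derivative (\<lambda>t. A) (0\<^sub>m nr nc) x nr nc"
  unfolding has_mat_derivative_def by auto

lemma has_mat_derivative_add: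
  assumes f: "has_mat_derivative f f' x nr nc" and g: "has_mat_derivative g g' x nr nc"
  shows "has_mat_derivative (\<lambda>t. f t + g t) (f' + g') x nr nc"
proof -
  note f' = has_mat_derivativeD(1)[OF f] and g' = has_mat_derivativeD(1)[OF g]
  have ev: "\<forall>\<^sub>F t in nhds x. f t \<in> carrier_mat nr nc \<and> g t \<in> carrier_mat nr nc"
    using has_mat_derivativeD(2)[OF f] has_mat_derivativeD(2)[OF g] by (rule eventually_conj)
  have "((\<lambda>t. (f t + g t) $$ (a,b)) has_real_derivative (f' + g') $$ (a,b)) (at x)"
    if ab: "a < nr" "b < nc" for a b
  proof (rule DERIV_transform_nhds[OF DERIV_add[OF has_mat_derivativeD(4)[OF f ab] has_mat_derivativeD(4)[OF g ab]]])
    show "\<forall>\<^sub>F t in nhds x. (f t + g t) $$ (a,b) = f t $$ (a,b) + g t $$ (a,b)"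
      using ev by eventually_elim (use ab in auto)
  qed (use f' g' ab in auto)
  with f' g' ev show ?thesis
    unfolding has_mat_derivative_def by (auto elim: eventually_mono)
qed

lemma has_mat_derivative_smult_const:
  assumes "(s has_real_derivative s') (at x)" and "A \<in> carrier_mat nr nc"
  shows "has_mat_derivative (\<lambda>t. s t \<cdot>\<^sub>m A) (s' \<cdot>\<^sub>m A) x nr nc"
  using assms DERIV_cmult_right[OF assms(1)] unfolding has_mat_derivative_def by auto

lemma has_mat_derivative_mult:
  assumes f: "has_mat_derivative f f' x nr n" and g: "has_mat_derivative g g' x n nc"
  shows "has_mat_derivative (\<lambda>t. f t * g t) (f' * g x + f x * g') x nr nc"
proof -
  note f' = has_mat_derivativeD(1,3)[OF f] and g' = has_mat_derivativeD(1,3)[OF g]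
  have ev: "\<forall>\<^sub>F t in nhds x. f t \<in> carrier_mat nr n \<and> g t \<in> carrier_mat n nc"
    using has_mat_derivativeD(2)[OF f] has_mat_derivativeD(2)[OF g] by (rule eventually_conj)
  have "((\<lambda>t. (f t * g t) $$ (a,b)) has_real_derivative (f' * g x + f x * g') $$ (a,b)) (at x)"
    if ab: "a < nr" "b < nc" for a b
  proof (rule DERIV_transform_nhds)
    show "((\<lambda>t. \<Sum>c<n. f t $$ (a,c) * g t $$ (c,b)) has_real_derivative
        (\<Sum>c<n. f' $$ (a,c) * g x $$ (c,b) + g' $$ (c,b) * f x $$ (a,c))) (at x)"
      by (intro DERIV_sum DERIV_mult has_mat_derivativeD(4)[OF f] has_mat_derivativeD(4)[OF g])
        (use ab in auto)
    show "\<forall>\<^sub>F t in nhds x. (f t * g t) $$ (a,b) = (\<Sum>c<n. f t $$ (a,c) * g t $$ (c,b))"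
      using ev by eventually_elim (use ab in \<open>auto simp: scalar_prod_def atLeast0LessThan\<close>)
  qed (use ab f' g' in \<open>auto simp: scalar_prod_def sum.distrib atLeast0LessThan mult.commute\<close>)
  with f' g' ev show ?thesis
    unfolding has_mat_derivative_def by (auto elim: eventually_mono)
qed

lemma has_mat_derivative_sandwich:
  assumes f: "has_mat_derivative f f' x n m" and A: "A \<in> carrier_mat nr n" and B: "B \<in> carrier_mat m nc"
  shows "has_mat_derivative (\<lambda>t. A * f t * B) (A * f' * B) x nr nc"
proof -
  note f' = has_mat_derivativeD(1,3)[OF f]
  have "has_mat_derivative (\<lambda>t. A * f t * B) ((0\<^sub>m nr n * f x + A * f') * B + (A * f x) * 0\<^sub>m m nc) x nr nc"
    by (rule has_mat_derivative_mult[OF has_mat_derivative_mult[OF has_mat_derivative_const[OF A] f]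
          has_mat_derivative_const[OF B]])
  also have "(0\<^sub>m nr n * f x + A * f') * B + (A * f x) * 0\<^sub>m m nc = A * f' * B"
    using A B f' by simp
  finally show ?thesis .
qed

lemma has_mat_derivative_submatrix:
  assumes f: "has_mat_derivative f f' x nr nc" and I: "I \<subseteq> {..<nr}" and J: "J \<subseteq> {..<nc}"
  shows "has_mat_derivative (\<lambda>t. submatrix (f t) I J) (submatrix f' I J) x (card I) (card J)"
  unfolding has_mat_derivative_def
proof (intro conjI allI impI)
  note f' = has_mat_derivativeD(1)[OF f] and ev = has_mat_derivativeD(2)[OF f]
  show "submatrix f' I J \<in> carrier_mat (card I) (card J)" by (rule submatrix_carrier_mat[OF f' I J])
  show "\<forall>\<^sub>F t in nhds x. submatrix (f t) I J \<in> carrier_mat (card I) (card J)"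
    using ev by eventually_elim (rule submatrix_carrier_mat[OF _ I J])
  fix a b assume ab: "a < card I" "b < card J"
  have pick: "pick I a < nr" "pick J b < nc" using pick_less(2)[OF I ab(1)] pick_less(2)[OF J ab(2)] .
  show "((\<lambda>t. submatrix (f t) I J $$ (a,b)) has_real_derivative submatrix f' I J $$ (a,b)) (at x)"
  proof (rule DERIV_transform_nhds[OF has_mat_derivativeD(4)[OF f pick]])
    show "\<forall>\<^sub>F t in nhds x. submatrix (f t) I J $$ (a,b) = f t $$ (pick I a, pick J b)"
      using ev by eventually_elim (rule submatrix_index_pick[OF _ I J ab])
  qed (rule submatrix_index_pick[OF f' I J ab])
qed

lemma det_differentiable:
  fixes A :: "real \<Rightarrow> real mat"
  assumes ev: "\<forall>\<^sub>F t in nhds x. A t \<in> carrier_mat n n"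
    and entries: "\<And>a b. a < n \<Longrightarrow> b < n \<Longrightarrow> (\<lambda>t. A t $$ (a,b) :: real) differentiable (at x)"
  shows "(\<lambda>t. det (A t)) differentiable (at x)"
proof (rule differentiable_transform_nhds)
  show "(\<lambda>t. \<Sum>p\<in>{p. p permutes {0..<n}}. signof p * (\<Prod>i=0..<n. A t $$ (i, p i))) differentiable (at x)"
  proof (intro differentiable_sum ballI differentiable_mult differentiable_const differentiable_prod)
    fix p i assume "p \<in> {p. p permutes {0..<n}}" "i \<in> {0..<n}"
    then show "(\<lambda>t. A t $$ (i, p i)) differentiable (at x)"
      by (intro entries) (auto simp: permutes_in_image)
  qed (simp_all add: finite_permutations)
  show "\<forall>\<^sub>F t in nhds x. det (A t) = (\<Sum>p\<in>{p. p permutes {0..<n}}. signof p * (\<Prod>i=0..<n. A t $$ (i, p i)))"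
    using ev by eventually_elim (rule det_def')
qed

lemma minv_mat_inverse:
  assumes A: "A \<in> carrier_mat n n" and "det A \<noteq> 0"
  shows "minv A \<in> carrier_mat n n" and "A * minv A = 1\<^sub>m n" and "minv A * A = 1\<^sub>m n"
proof -
  have "A \<in> Units (ring_mat TYPE(real) n ())" by (rule det_non_zero_imp_unit[OF assms])
  then obtain B where "mat_inverse A = Some B"
    using mat_inverse(1)[OF A, where b="()"] by (cases "mat_inverse A") auto
  then show "minv A \<in> carrier_mat n n" "A * minv A = 1\<^sub>m n" "minv A * A = 1\<^sub>m n"
    using mat_inverse(2)[OF A] unfolding minv_def by auto
qed

lemma minv_eqI:
  assumes A: "A \<in> carrier_mat n n" and C: "C \<in> carrier_mat n n" and AC: "A * C = 1\<^sub>m n"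
  shows "minv A = (C :: real mat)"
proof -
  have "det A * det C = 1" using det_mult[OF A C] AC by simp
  then have "det A \<noteq> 0" by auto
  note M = minv_mat_inverse[OF A this]
  have "minv A = minv A * (A * C)" using M(1) by (simp add: AC)
  also have "\<dots> = (minv A * A) * C" using M(1) A C by (simp add: assoc_mult_mat[of _ n n _ n _ n])
  finally show ?thesis using M(3) C by simp
qed

lemma minv_adj_mat:
  assumes A: "A \<in> carrier_mat n n" and d: "det A \<noteq> (0::real)"
  shows "minv A = (1 / det A) \<cdot>\<^sub>m adj_mat A"
proof (rule minv_eqI[OF A])
  show "(1 / det A) \<cdot>\<^sub>m adj_mat A \<in> carrier_mat n n" using adj_mat(1)[OF A] by simp
  have "A * ((1 / det A) \<cdot>\<^sub>m adj_mat A) = (1 / det A) \<cdot>\<^sub>m (A * adj_mat A)"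
    using mult_smult_distrib[OF A adj_mat(1)[OF A]] by simp
  also have "\<dots> = 1\<^sub>m n" unfolding adj_mat(2)[OF A] using d by (intro eq_matI) auto
  finally show "A * ((1 / det A) \<cdot>\<^sub>m adj_mat A) = 1\<^sub>m n" .
qed

lemma eventually_nonzero_DERIV:
  assumes "DERIV g x :> D" and "g x \<noteq> (0::real)"
  shows "\<forall>\<^sub>F t in nhds x. g t \<noteq> 0"
proof -
  have "(g \<longlongrightarrow> g x) (at x)" using DERIV_continuous[OF assms(1)] continuous_at by blast
  then have "\<forall>\<^sub>F t in at x. g t \<noteq> 0" using tendsto_imp_eventually_ne assms(2) by blast
  then show ?thesis using assms(2) eventually_nhds_conv_at by blast
qed

lemma has_mat_derivative_imp_det_differentiable:
  assumes f: "has_mat_derivative f f' x n n"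
  shows "(\<lambda>t. det (f t)) differentiable (at x)"
  using has_mat_derivativeD(2,4)[OF f] real_differentiable_def by (blast intro: det_differentiable)

lemma has_mat_derivative_eventually_det_nonzero:
  assumes f: "has_mat_derivative f f' x n n" and d: "det (f x) \<noteq> 0"
  shows "\<forall>\<^sub>F t in nhds x. f t \<in> carrier_mat n n \<and> det (f t) \<noteq> 0"
proof -
  obtain Dd where "DERIV (\<lambda>t. det (f t)) x :> Dd"
    using has_mat_derivative_imp_det_differentiable[OF f] unfolding real_differentiable_def by blast
  from eventually_nonzero_DERIV[OF this d] show ?thesis
    using has_mat_derivativeD(2)[OF f] by (rule eventually_conj[rotated])
qed

lemma minv_entry_differentiable:
  assumes f: "has_mat_derivative f f' x n n" and d: "det (f x) \<noteq> 0" and ab: "a < n" "b < n"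
  shows "(\<lambda>t. minv (f t) $$ (a,b)) differentiable (at x)"
proof -
  note ev = has_mat_derivativeD(2)[OF f]
  have entries: "(\<lambda>t. f t $$ (i,j)) differentiable (at x)" if "i < n" "j < n" for i j
    using has_mat_derivativeD(4)[OF f that] real_differentiable_def by blast
  obtain Dd where Dd: "DERIV (\<lambda>t. det (f t)) x :> Dd"
    using has_mat_derivative_imp_det_differentiable[OF f] unfolding real_differentiable_def by blast
  have minor: "(\<lambda>t. det (mat_delete (f t) b a)) differentiable (at x)"
  proof (rule det_differentiable[where n="n-1"])
    show "\<forall>\<^sub>F t in nhds x. mat_delete (f t) b a \<in> carrier_mat (n-1) (n-1)"
      using ev by eventually_elim (rule mat_delete_carrier)
    fix i j assume ij: "i < n-1" "j < n-1"
    show "(\<lambda>t. mat_delete (f t) b a $$ (i,j)) differentiable (at x)"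
    proof (rule differentiable_transform_nhds)
      show "(\<lambda>t. f t $$ (if i < b then i else Suc i, if j < a then j else Suc j)) differentiable (at x)"
        by (rule entries) (use ij in auto)
      show "\<forall>\<^sub>F t in nhds x. mat_delete (f t) b a $$ (i,j) = f t $$ (if i < b then i else Suc i, if j < a then j else Suc j)"
        using ev by eventually_elim (use ij in \<open>auto simp: mat_delete_def\<close>)
    qed
  qed
  show ?thesis
  proof (rule differentiable_transform_nhds)
    show "(\<lambda>t. inverse (det (f t)) * ((-1)^(b+a) * det (mat_delete (f t) b a))) differentiable (at x)"
    proof (intro differentiable_mult differentiable_const minor)
      show "(\<lambda>t. inverse (det (f t))) differentiable (at x)"
        using DERIV_inverse_fun[OF Dd d] real_differentiable_def by blast
    qed
    show "\<forall>\<^sub>F t in nhds x. minv (f t) $$ (a,b) = inverse (det (f t)) * ((-1)^(b+a) * det (mat_delete (f t) b a))"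
      using has_mat_derivative_eventually_det_nonzero[OF f d] by eventually_elim
        (use ab in \<open>auto simp: minv_adj_mat adj_mat_def cofactor_def divide_inverse\<close>)
  qed
qed

text \<open>Differentiating \<open>f t * minv (f t) = 1\<close> gives \<open>d(M\<inverse>) = - M\<inverse> dM M\<inverse>\<close>, once the entries of
  the inverse are known to be differentiable (by the adjugate formula).\<close>

lemma has_mat_derivative_minv:
  assumes f: "has_mat_derivative f f' x n n" and d: "det (f x) \<noteq> 0"
  shows "has_mat_derivative (\<lambda>t. minv (f t)) (- (minv (f x) * f' * minv (f x))) x n n"
proof -
  note fx = has_mat_derivativeD(3)[OF f] and f' = has_mat_derivativeD(1)[OF f]
  define M where "M = minv (f x)"
  have M: "M \<in> carrier_mat n n" "M * f x = 1\<^sub>m n" using minv_mat_inverse[OF fx d] M_def by auto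
  have ev: "\<forall>\<^sub>F t in nhds x. f t \<in> carrier_mat n n \<and> det (f t) \<noteq> 0"
    by (rule has_mat_derivative_eventually_det_nonzero[OF f d])
  define G' where "G' = mat n n (\<lambda>(a,b). deriv (\<lambda>t. minv (f t) $$ (a,b)) x)"
  have g: "has_mat_derivative (\<lambda>t. minv (f t)) G' x n n"
    unfolding has_mat_derivative_def
  proof (intro conjI allI impI)
    show "\<forall>\<^sub>F t in nhds x. minv (f t) \<in> carrier_mat n n"
      using ev by eventually_elim (use minv_mat_inverse in blast)
    fix a b assume "a < n" "b < n"
    then show "((\<lambda>t. minv (f t) $$ (a,b)) has_real_derivative G' $$ (a,b)) (at x)"
      using minv_entry_differentiable[OF f d] DERIV_deriv_iff_real_differentiable G'_def by simp
  qed (simp add: G'_def)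
  note G'c = has_mat_derivativeD(1)[OF g]
  have prod: "has_mat_derivative (\<lambda>t. f t * minv (f t)) (f' * M + f x * G') x n n"
    using has_mat_derivative_mult[OF f g] M_def by simp
  have "f x * G' = - (f' * M)"
  proof (rule eq_matI)
    fix a b assume "a < dim_row (- (f' * M))" "b < dim_col (- (f' * M))"
    then have ab: "a < n" "b < n" using f' M by auto
    have "((\<lambda>t. (f t * minv (f t)) $$ (a,b)) has_real_derivative 0) (at x)"
    proof (rule DERIV_transform_nhds[OF DERIV_const[of "1\<^sub>m n $$ (a,b)"]])
      show "\<forall>\<^sub>F t in nhds x. (f t * minv (f t)) $$ (a,b) = 1\<^sub>m n $$ (a,b)"
        using ev by eventually_elim (use minv_mat_inverse in metis)
    qed simp
    then have "(f' * M + f x * G') $$ (a,b) = 0"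
      using DERIV_unique has_mat_derivativeD(4)[OF prod ab] by blast
    then show "(f x * G') $$ (a,b) = (- (f' * M)) $$ (a,b)" using ab f' M fx G'c by simp
  qed (use f' M fx G'c in auto)
  have "G' = (M * f x) * G'" unfolding M(2) using G'c by simp
  also have "\<dots> = M * (f x * G')" by (rule assoc_mult_mat[OF M(1) fx G'c])
  also have "\<dots> = - (M * (f' * M))" using M f' by (simp add: \<open>f x * G' = - (f' * M)\<close>)
  also have "\<dots> = - (M * f' * M)" by (simp only: assoc_mult_mat[OF M(1) f' M(1)])
  finally show ?thesis using g M_def by simp
qed

section \<open>Principal submatrices of a coercive matrix\<close>

definition embed_vec :: "nat set \<Rightarrow> nat \<Rightarrow> real vec \<Rightarrow> real vec" where
  "embed_vec I n w = vec n (\<lambda>j. if j \<in> I then w $ card {a\<in>I. a < j} else 0)"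

lemma embed_vec_carrier [simp]: "embed_vec I n w \<in> carrier_vec n"
  by (simp add: embed_vec_def)

lemma sum_embed_vec:
  assumes I: "I \<subseteq> {..<n}"
  shows "(\<Sum>j\<in>{0..<n}. embed_vec I n w $ j * g j) = (\<Sum>a\<in>{0..<card I}. w $ a * g (pick I a))"
proof -
  have fin: "finite I" using I finite_subset by blast
  have "(\<Sum>j\<in>{0..<n}. embed_vec I n w $ j * g j) = (\<Sum>j\<in>I. w $ card {a\<in>I. a < j} * g j)"
    using I by (intro sum.mono_neutral_cong_right) (auto simp: embed_vec_def)
  also have "\<dots> = (\<Sum>a\<in>{0..<card I}. w $ a * g (pick I a))"
  proof (rule sum.reindex_bij_witness[where i="pick I" and j="\<lambda>j. card {a\<in>I. a < j}"])
    fix j assume j: "j \<in> I"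
    show "pick I (card {a\<in>I. a < j}) = j" by (rule pick_card_in_set[OF j])
    have "{a\<in>I. a < j} \<subset> I" using j by auto
    then show "card {a\<in>I. a < j} \<in> {0..<card I}" using psubset_card_mono[OF fin] by auto
    show "w $ card {a\<in>I. a < j} * g (pick I (card {a\<in>I. a < j})) = w $ card {a\<in>I. a < j} * g j"
      by (simp add: pick_card_in_set[OF j])
  qed (auto simp: card_pick_le pick_in_set_le)
  finally show ?thesis .
qed

lemma scalar_prod_embed_vec:
  assumes "I \<subseteq> {..<n}" and "u \<in> carrier_vec n"
  shows "embed_vec I n w \<bullet> u = (\<Sum>a\<in>{0..<card I}. w $ a * u $ pick I a)"
  using sum_embed_vec[OF assms(1)] assms(2) by (simp add: scalar_prod_def)

lemma embed_vec_pick: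
  assumes "I \<subseteq> {..<n}" and "a < card I"
  shows "embed_vec I n w $ pick I a = w $ a"
  using pick_less[OF assms] card_pick_le[OF assms(2)] by (simp add: embed_vec_def)

lemma mult_mat_vec_embed_vec:
  assumes A: "A \<in> carrier_mat nr n" and I: "I \<subseteq> {..<n}" and j: "j < nr"
  shows "(A *\<^sub>v embed_vec I n w) $ j = (\<Sum>b\<in>{0..<card I}. A $$ (j, pick I b) * w $ b)"
proof -
  have "(A *\<^sub>v embed_vec I n w) $ j = embed_vec I n w \<bullet> row A j"
    using A j by (simp add: comm_scalar_prod[of _ n])
  also have "\<dots> = (\<Sum>b\<in>{0..<card I}. w $ b * row A j $ pick I b)"
    by (rule scalar_prod_embed_vec[OF I]) (use A in auto)
  also have "\<dots> = (\<Sum>b\<in>{0..<card I}. A $$ (j, pick I b) * w $ b)"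
    using A j pick_less[OF I] by (auto intro!: sum.cong)
  finally show ?thesis .
qed

lemma embed_vec_quadratic_form:
  assumes A: "A \<in> carrier_mat n n" and I: "I \<subseteq> {..<n}" and w: "w \<in> carrier_vec (card I)"
  shows "embed_vec I n w \<bullet> (A *\<^sub>v embed_vec I n w) = w \<bullet> (submatrix A I I *\<^sub>v w)"
proof -
  have "embed_vec I n w \<bullet> (A *\<^sub>v embed_vec I n w)
      = (\<Sum>a\<in>{0..<card I}. w $ a * (A *\<^sub>v embed_vec I n w) $ pick I a)"
    by (rule scalar_prod_embed_vec[OF I]) (use A in auto)
  also have "\<dots> = (\<Sum>a\<in>{0..<card I}. w $ a * (\<Sum>b\<in>{0..<card I}. A $$ (pick I a, pick I b) * w $ b))"
    using mult_mat_vec_embed_vec[OF A I pick_less(2)[OF I]] by simp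
  also have "\<dots> = w \<bullet> (submatrix A I I *\<^sub>v w)"
    using A I w submatrix_carrier_mat[OF A I I]
    by (auto simp: scalar_prod_def submatrix_index_pick intro!: sum.cong)
  finally show ?thesis .
qed

lemma embed_vec_norm:
  assumes "I \<subseteq> {..<n}" and "w \<in> carrier_vec (card I)"
  shows "embed_vec I n w \<bullet> embed_vec I n w = w \<bullet> (w :: real vec)"
proof -
  have "embed_vec I n w \<bullet> embed_vec I n w = (\<Sum>a\<in>{0..<card I}. w $ a * embed_vec I n w $ pick I a)"
    by (rule scalar_prod_embed_vec[OF assms(1)]) simp
  then show ?thesis using assms by (simp add: embed_vec_pick scalar_prod_def)
qed

lemma scalar_prod_self_pos:
  assumes "w \<in> carrier_vec k" and "w \<noteq> 0\<^sub>v k"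
  shows "0 < w \<bullet> (w :: real vec)"
proof -
  obtain a where a: "a < k" "w $ a \<noteq> 0" using assms by (metis carrier_vecD eq_vecI index_zero_vec)
  have "0 < w $ a * w $ a" using a(2) not_real_square_gt_zero by blast
  also have "\<dots> \<le> (\<Sum>b\<in>{0..<k}. w $ b * w $ b)" by (rule member_le_sum) (use a in auto)
  finally show ?thesis using assms(1) by (simp add: scalar_prod_def)
qed

lemma det_principal_submatrix_nonzero:
  assumes C: "C \<in> carrier_mat n n" and I: "I \<subseteq> {..<n}" and "s > 0"
    and coercive: "\<And>v. v \<in> carrier_vec n \<Longrightarrow> s * (v \<bullet> v) \<le> v \<bullet> (C *\<^sub>v v)"
  shows "det (submatrix C I I) \<noteq> (0::real)"
proof
  assume "det (submatrix C I I) = 0"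
  then obtain w where w: "w \<in> carrier_vec (card I)" "w \<noteq> 0\<^sub>v (card I)" "submatrix C I I *\<^sub>v w = 0\<^sub>v (card I)"
    using det_0_iff_vec_prod_zero[OF submatrix_carrier_mat[OF C I I]] by blast
  have "s * (w \<bullet> w) \<le> 0"
    using coercive[of "embed_vec I n w"] embed_vec_quadratic_form[OF C I w(1)] embed_vec_norm[OF I w(1)] w
    by simp
  then show False using scalar_prod_self_pos[OF w(1,2)] \<open>s > 0\<close> by (simp add: mult_le_0_iff)
qed

text \<open>For \<open>Ci = C\<^sub>I\<inverse>\<close> the vector \<open>v = e\<^sub>i - C\<^sub>I\<inverse> C\<^sub>I\<^sub>,\<^sub>i\<close> (embedded) satisfies \<open>(C v)\<^sub>I = 0\<close>, so
  \<open>v\<^sup>T C v = (C v)\<^sub>i\<close> is the Schur complement \<open>C\<^sub>i\<^sub>i - C\<^sub>i\<^sub>,\<^sub>I C\<^sub>I\<inverse> C\<^sub>I\<^sub>,\<^sub>i\<close>.\<close>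

definition schur_vector :: "nat \<Rightarrow> real mat \<Rightarrow> real mat \<Rightarrow> nat set \<Rightarrow> nat \<Rightarrow> real vec" where
  "schur_vector n C Ci I i = unit_vec n i - embed_vec I n (Ci *\<^sub>v col (submatrix C I {i}) 0)"

lemma mult_mat_vec_schur_vector:
  assumes C: "C \<in> carrier_mat n n" and I: "I \<subseteq> {..<n}" and "i < n" and j: "j < n"
  shows "(C *\<^sub>v schur_vector n C Ci I i) $ j
    = C $$ (j,i) - (\<Sum>b\<in>{0..<card I}. C $$ (j, pick I b) * (Ci *\<^sub>v col (submatrix C I {i}) 0) $ b)"
proof -
  have "C *\<^sub>v schur_vector n C Ci I i
      = C *\<^sub>v unit_vec n i - C *\<^sub>v embed_vec I n (Ci *\<^sub>v col (submatrix C I {i}) 0)"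
    unfolding schur_vector_def by (rule mult_minus_distrib_mat_vec[OF C]) auto
  then show ?thesis
    using j C \<open>i < n\<close> by (simp add: mult_mat_vec_embed_vec[OF C I j] scalar_prod_right_unit)
qed

lemma schur_vector_quadratic_form:
  fixes C Ci :: "real mat"
  assumes C: "C \<in> carrier_mat n n" and I: "I \<subseteq> {..<n}" and i: "i < n"
    and Ci: "Ci \<in> carrier_mat (card I) (card I)" and inv: "submatrix C I I * Ci = 1\<^sub>m (card I)"
  defines "v \<equiv> schur_vector n C Ci I i"
  shows "v \<bullet> (C *\<^sub>v v) = C $$ (i,i) - (submatrix C {i} I * Ci * submatrix C I {i}) $$ (0,0)"
proof -
  let ?k = "card I" and ?c = "col (submatrix C I {i}) 0"
  define y where "y = Ci *\<^sub>v ?c"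
  have si: "{i} \<subseteq> {..<n}" using i by auto
  note CII = submatrix_carrier_mat[OF C I I] and Crow = submatrix_carrier_mat[OF C si I]
  have Ccol: "submatrix C I {i} \<in> carrier_mat ?k 1" using submatrix_carrier_mat[OF C I si] by simp
  have c: "?c \<in> carrier_vec ?k" using Ccol by (intro col_carrier_vec) auto
  have y: "y \<in> carrier_vec ?k" using Ci c unfolding y_def by (rule mult_mat_vec_carrier)
  have v: "v \<in> carrier_vec n" unfolding v_def schur_vector_def by simp
  have Cy: "submatrix C I I *\<^sub>v y = ?c" using assoc_mult_mat_vec[OF CII Ci c] inv c by (simp add: y_def)
  note Cv = mult_mat_vec_schur_vector[OF C I i, of _ Ci, folded y_def v_def]
  have Cv_I: "(C *\<^sub>v v) $ pick I a = 0" if a: "a < ?k" for a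
  proof -
    have "(\<Sum>b\<in>{0..<?k}. C $$ (pick I a, pick I b) * y $ b) = (submatrix C I I *\<^sub>v y) $ a"
      using a y CII by (simp add: scalar_prod_def submatrix_index_pick[OF C I I])
    also have "\<dots> = C $$ (pick I a, i)"
      using a Ccol by (simp add: Cy submatrix_index_pick[OF C I si] del: pick.simps)
    finally show ?thesis
      unfolding Cv[OF pick_less(2)[OF I a]] by simp
  qed
  have "v \<bullet> (C *\<^sub>v v) = unit_vec n i \<bullet> (C *\<^sub>v v) - embed_vec I n y \<bullet> (C *\<^sub>v v)"
    unfolding v_def schur_vector_def y_def by (rule minus_scalar_prod_distrib[of _ n]) (use C in auto)
  also have "embed_vec I n y \<bullet> (C *\<^sub>v v) = 0"
    using scalar_prod_embed_vec[OF I, of "C *\<^sub>v v" y] Cv_I C v by simp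
  also have "unit_vec n i \<bullet> (C *\<^sub>v v) = C $$ (i,i) - (\<Sum>b\<in>{0..<?k}. C $$ (i, pick I b) * y $ b)"
    using scalar_prod_left_unit[of "C *\<^sub>v v" n i] C v i by (simp add: Cv[OF i])
  also have "(\<Sum>b\<in>{0..<?k}. C $$ (i, pick I b) * y $ b) = (submatrix C {i} I * Ci * submatrix C I {i}) $$ (0,0)"
  proof -
    have "submatrix C {i} I * Ci * submatrix C I {i} = submatrix C {i} I * (Ci * submatrix C I {i})"
      using Crow Ci Ccol by (simp add: assoc_mult_mat[of _ 1 ?k _ ?k _ 1])
    moreover have "col (Ci * submatrix C I {i}) 0 = y" unfolding y_def by (rule col_mult2[OF Ci Ccol]) simp
    ultimately show ?thesis
      using Crow Ci Ccol y by (simp add: scalar_prod_def submatrix_index_pick[OF C si I] del: pick.simps)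
  qed
  finally show ?thesis by simp
qed

lemma schur_vector_norm:
  assumes "i < n" and "i \<notin> I"
  shows "1 \<le> schur_vector n C Ci I i \<bullet> schur_vector n C Ci I i"
proof -
  let ?v = "schur_vector n C Ci I i"
  have "?v $ i = 1" using assms by (simp add: schur_vector_def embed_vec_def)
  moreover have "?v $ i * ?v $ i \<le> (\<Sum>j\<in>{0..<n}. ?v $ j * ?v $ j)"
    by (intro member_le_sum) (use assms in auto)
  moreover have "?v \<in> carrier_vec n" by (simp add: schur_vector_def)
  ultimately show ?thesis by (simp add: scalar_prod_def)
qed

lemma schur_complement_pos:
  fixes C Ci :: "real mat"
  assumes C: "C \<in> carrier_mat n n" and I: "I \<subseteq> {..<n}" and i: "i < n" "i \<notin> I" and "s > 0"
    and coercive: "\<And>v. v \<in> carrier_vec n \<Longrightarrow> s * (v \<bullet> v) \<le> v \<bullet> (C *\<^sub>v v)"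
    and Ci: "Ci \<in> carrier_mat (card I) (card I)" and inv: "submatrix C I I * Ci = 1\<^sub>m (card I)"
  shows "(submatrix C {i} I * Ci * submatrix C I {i}) $$ (0,0) < C $$ (i,i)"
proof -
  let ?v = "schur_vector n C Ci I i"
  have "s \<le> s * (?v \<bullet> ?v)" using schur_vector_norm[OF i] \<open>s > 0\<close> by simp
  also have "\<dots> \<le> ?v \<bullet> (C *\<^sub>v ?v)" by (rule coercive) (simp add: schur_vector_def)
  finally show ?thesis using schur_vector_quadratic_form[OF C I i(1) Ci inv] \<open>s > 0\<close> by simp
qed

section \<open>Positivity of the Vecchia factors\<close>

lemma Gm_carrier: "Z \<in> carrier_mat n m \<Longrightarrow> S \<in> carrier_mat m m \<Longrightarrow> Gm Z S \<in> carrier_mat n n"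
  by (simp add: Gm_def)

lemma Cm_carrier: "Z \<in> carrier_mat n m \<Longrightarrow> S \<in> carrier_mat m m \<Longrightarrow> Cm Z S s \<in> carrier_mat n n"
  by (simp add: Cm_def Gm_def)

lemma Cm_coercive:
  fixes Z S :: "real mat"
  assumes Z: "Z \<in> carrier_mat n m" and S: "S \<in> carrier_mat m m"
    and psd: "\<And>x. x \<in> carrier_vec m \<Longrightarrow> 0 \<le> x \<bullet> (S *\<^sub>v x)" and v: "v \<in> carrier_vec n"
  shows "s * (v \<bullet> v) \<le> v \<bullet> (Cm Z S s *\<^sub>v v)"
proof -
  define p where "p = transpose_mat Z *\<^sub>v v"
  have p: "p \<in> carrier_vec m" using Z v by (simp add: p_def)
  have G: "Gm Z S \<in> carrier_mat n n" by (rule Gm_carrier[OF Z S])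
  have "v \<bullet> (Gm Z S *\<^sub>v v) = v \<bullet> (Z *\<^sub>v (S *\<^sub>v p))"
    using Z S v by (simp add: Gm_def p_def assoc_mult_mat_vec[of _ n m _ n])
  also have "\<dots> = p \<bullet> (S *\<^sub>v p)"
    unfolding p_def by (rule transpose_vec_mult_scalar[symmetric]) (use Z S p v in auto)
  finally have "0 \<le> v \<bullet> (Gm Z S *\<^sub>v v)" using psd[OF p] by simp
  moreover have "s \<cdot>\<^sub>v v = (s \<cdot>\<^sub>m 1\<^sub>m n) *\<^sub>v v" using v by auto
  then have "Cm Z S s *\<^sub>v v = Gm Z S *\<^sub>v v + s \<cdot>\<^sub>v v"
    using Z G v by (simp add: Cm_def add_mult_distrib_mat_vec[of _ n n])
  ultimately show ?thesis
    using G v by (simp add: scalar_prod_add_distrib[of _ n])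
qed

lemma det_submatrix_Cm_nonzero:
  fixes Z S :: "real mat"
  assumes Z: "Z \<in> carrier_mat n m" and S: "S \<in> carrier_mat m m"
    and psd: "\<And>x. x \<in> carrier_vec m \<Longrightarrow> 0 \<le> x \<bullet> (S *\<^sub>v x)" and "s > 0" and I: "I \<subseteq> {..<n}"
  shows "det (submatrix (Cm Z S s) I I) \<noteq> 0"
  using det_principal_submatrix_nonzero[OF Cm_carrier[OF Z S] I \<open>s > 0\<close> Cm_coercive[OF Z S psd]] .

lemma CNinv_inverse:
  fixes Z S :: "real mat"
  assumes Z: "Z \<in> carrier_mat n m" and S: "S \<in> carrier_mat m m"
    and psd: "\<And>x. x \<in> carrier_vec m \<Longrightarrow> 0 \<le> x \<bullet> (S *\<^sub>v x)" and "s > 0" and I: "N i \<subseteq> {..<n}"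
  shows "CNinv Z S s N i \<in> carrier_mat (card (N i)) (card (N i))"
    and "submatrix (Cm Z S s) (N i) (N i) * CNinv Z S s N i = 1\<^sub>m (card (N i))"
  using minv_mat_inverse[OF submatrix_carrier_mat[OF Cm_carrier[OF Z S] I I] det_submatrix_Cm_nonzero[OF assms]]
  unfolding CNinv_def by auto

lemma submatrix_Gm_eq_Cm:
  assumes Z: "Z \<in> carrier_mat n m" and S: "S \<in> carrier_mat m m"
    and I: "I \<subseteq> {..<n}" and J: "J \<subseteq> {..<n}" and disj: "I \<inter> J = {}"
  shows "submatrix (Gm Z S) I J = submatrix (Cm Z S s) I J"
proof (rule eq_matI)
  note G = Gm_carrier[OF Z S] and C = Cm_carrier[OF Z S, of s]
  show "dim_row (submatrix (Gm Z S) I J) = dim_row (submatrix (Cm Z S s) I J)"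
    "dim_col (submatrix (Gm Z S) I J) = dim_col (submatrix (Cm Z S s) I J)"
    using submatrix_carrier_mat[OF G I J] submatrix_carrier_mat[OF C I J] by auto
  fix a b assume "a < dim_row (submatrix (Cm Z S s) I J)" "b < dim_col (submatrix (Cm Z S s) I J)"
  then have ab: "a < card I" "b < card J" using submatrix_carrier_mat[OF C I J] by auto
  have "pick I a \<noteq> pick J b" using pick_less(1)[OF I ab(1)] pick_less(1)[OF J ab(2)] disj by auto
  then show "submatrix (Gm Z S) I J $$ (a,b) = submatrix (Cm Z S s) I J $$ (a,b)"
    using G Z pick_less(2)[OF I ab(1)] pick_less(2)[OF J ab(2)]
    unfolding submatrix_index_pick[OF G I J ab] submatrix_index_pick[OF C I J ab] by (simp add: Cm_def)
qed

lemma Dsc_pos: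
  fixes Z S :: "real mat"
  assumes Z: "Z \<in> carrier_mat n m" and S: "S \<in> carrier_mat m m"
    and psd: "\<And>x. x \<in> carrier_vec m \<Longrightarrow> 0 \<le> x \<bullet> (S *\<^sub>v x)" and "s > 0"
    and I: "N i \<subseteq> {..<n}" and i: "i < n" "i \<notin> N i"
  shows "0 < Dsc Z S s N i"
proof -
  have si: "{i} \<subseteq> {..<n}" using i by auto
  have "Dsc Z S s N i = Cm Z S s $$ (i,i)
      - (submatrix (Cm Z S s) {i} (N i) * CNinv Z S s N i * submatrix (Cm Z S s) (N i) {i}) $$ (0,0)"
    using submatrix_Gm_eq_Cm[OF Z S si I, of s] submatrix_Gm_eq_Cm[OF Z S I si, of s] i
    by (simp add: Dsc_def Avec_def)
  then show ?thesis
    using schur_complement_pos[OF Cm_carrier[OF Z S] I i \<open>s > 0\<close> Cm_coercive[OF Z S psd]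
        CNinv_inverse[where N=N and i=i, OF Z S psd \<open>s > 0\<close> I]] by simp
qed

section \<open>Derivatives along a parameter path\<close>

text \<open>The derivatives of \<open>A\<^sub>i\<close> and \<open>D\<^sub>i\<close> along a path \<open>t \<mapsto> (\<Sigma>(t), \<sigma>\<^sup>2(t))\<close> with velocity
  \<open>(S', s')\<close>: the velocities of \<open>Z\<Sigma>Z\<^sup>T\<close> and \<open>C\<close> are \<open>Gm Z S'\<close> and \<open>Cm Z S' s'\<close>.\<close>

definition dA_path :: "real mat \<Rightarrow> real mat \<Rightarrow> real mat \<Rightarrow> real \<Rightarrow> real \<Rightarrow> (nat \<Rightarrow> nat set) \<Rightarrow> nat \<Rightarrow> real mat" where
  "dA_path Z S S' s s' N i = submatrix (Gm Z S') {i} (N i) * CNinv Z S s N i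
     - submatrix (Gm Z S) {i} (N i) * CNinv Z S s N i * submatrix (Cm Z S' s') (N i) (N i) * CNinv Z S s N i"

definition dD_path :: "real mat \<Rightarrow> real mat \<Rightarrow> real mat \<Rightarrow> real \<Rightarrow> real \<Rightarrow> (nat \<Rightarrow> nat set) \<Rightarrow> nat \<Rightarrow> real" where
  "dD_path Z S S' s s' N i = Cm Z S' s' $$ (i,i)
     - (dA_path Z S S' s s' N i * submatrix (Gm Z S) (N i) {i}) $$ (0,0)
     - (Avec Z S s N i * submatrix (Gm Z S') (N i) {i}) $$ (0,0)"

lemma has_mat_derivative_Cm:
  assumes Z: "Z \<in> carrier_mat n m" and Sf: "has_mat_derivative Sf S' x m m"
    and sf: "(sf has_real_derivative s') (at x)"
  shows "has_mat_derivative (\<lambda>t. Gm Z (Sf t)) (Gm Z S') x n n"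
    and "has_mat_derivative (\<lambda>t. Cm Z (Sf t) (sf t)) (Cm Z S' s') x n n"
proof -
  show G: "has_mat_derivative (\<lambda>t. Gm Z (Sf t)) (Gm Z S') x n n"
    unfolding Gm_def by (rule has_mat_derivative_sandwich[OF Sf]) (use Z in auto)
  show "has_mat_derivative (\<lambda>t. Cm Z (Sf t) (sf t)) (Cm Z S' s') x n n"
    unfolding Cm_def using Z by (simp add: has_mat_derivative_add[OF G has_mat_derivative_smult_const[OF sf]])
qed

lemma has_mat_derivative_Avec:
  fixes Z :: "real mat"
  assumes Z: "Z \<in> carrier_mat n m" and Sf: "has_mat_derivative Sf S' x m m"
    and sf: "(sf has_real_derivative s') (at x)"
    and psd: "\<And>v. v \<in> carrier_vec m \<Longrightarrow> 0 \<le> v \<bullet> (Sf x *\<^sub>v v)" and "sf x > 0"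
    and I: "N i \<subseteq> {..<n}" and i: "i < n"
  shows "has_mat_derivative (\<lambda>t. Avec Z (Sf t) (sf t) N i) (dA_path Z (Sf x) S' (sf x) s' N i) x 1 (card (N i))"
proof -
  let ?k = "card (N i)" and ?Ci = "CNinv Z (Sf x) (sf x) N i"
  have si: "{i} \<subseteq> {..<n}" using i by auto
  note S = has_mat_derivativeD(3)[OF Sf]
  note G = has_mat_derivative_Cm(1)[OF Z Sf sf] and C = has_mat_derivative_Cm(2)[OF Z Sf sf]
  have "has_mat_derivative (\<lambda>t. CNinv Z (Sf t) (sf t) N i)
      (- (?Ci * submatrix (Cm Z S' s') (N i) (N i) * ?Ci)) x ?k ?k"
    using has_mat_derivative_minv[OF has_mat_derivative_submatrix[OF C I I]
        det_submatrix_Cm_nonzero[OF Z S psd \<open>sf x > 0\<close> I]]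
    by (simp add: CNinv_def)
  from has_mat_derivative_mult[OF has_mat_derivative_submatrix[OF G si I, unfolded card.insert_remove] this]
  show ?thesis
    using submatrix_carrier_mat[OF has_mat_derivativeD(3)[OF G] si I]
      submatrix_carrier_mat[OF has_mat_derivativeD(1)[OF G] si I]
      submatrix_carrier_mat[OF has_mat_derivativeD(1)[OF C] I I]
      CNinv_inverse(1)[where N=N and i=i, OF Z S psd \<open>sf x > 0\<close> I]
    by (simp add: Avec_def dA_path_def minus_add_uminus_mat[of _ 1 ?k] assoc_mult_mat[of _ 1 ?k _ ?k _ ?k])
qed

lemma DERIV_Dsc:
  fixes Z :: "real mat"
  assumes Z: "Z \<in> carrier_mat n m" and Sf: "has_mat_derivative Sf S' x m m"
    and sf: "(sf has_real_derivative s') (at x)"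
    and psd: "\<And>v. v \<in> carrier_vec m \<Longrightarrow> 0 \<le> v \<bullet> (Sf x *\<^sub>v v)" and "sf x > 0"
    and I: "N i \<subseteq> {..<n}" and i: "i < n"
  shows "((\<lambda>t. Dsc Z (Sf t) (sf t) N i) has_real_derivative dD_path Z (Sf x) S' (sf x) s' N i) (at x)"
proof -
  have si: "{i} \<subseteq> {..<n}" using i by auto
  note G = has_mat_derivative_Cm(1)[OF Z Sf sf] and C = has_mat_derivative_Cm(2)[OF Z Sf sf]
  note A = has_mat_derivative_Avec[where N=N and i=i, OF Z Sf sf psd \<open>sf x > 0\<close> I i]
  note P = has_mat_derivative_mult[OF A has_mat_derivative_submatrix[OF G I si]]
  from DERIV_diff[OF has_mat_derivativeD(4)[OF C i i] has_mat_derivativeD(4)[OF P]]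
  show ?thesis
    using has_mat_derivativeD(1,3)[OF A] submatrix_carrier_mat[OF has_mat_derivativeD(1)[OF G] I si]
      submatrix_carrier_mat[OF has_mat_derivativeD(3)[OF G] I si]
    by (simp add: Dsc_def dD_path_def diff_diff_eq)
qed

lemma Gm_zero: "Z \<in> carrier_mat n m \<Longrightarrow> Gm Z (0\<^sub>m m m) = (0\<^sub>m n n :: real mat)"
  by (simp add: Gm_def)

lemma Cm_zero_one: "Z \<in> carrier_mat n m \<Longrightarrow> Cm Z (0\<^sub>m m m) 1 = (1\<^sub>m n :: real mat)"
  by (auto simp: Cm_def Gm_zero)

lemma Cm_zero_noise: "Z \<in> carrier_mat n m \<Longrightarrow> H \<in> carrier_mat m m \<Longrightarrow> Cm Z H 0 = Gm Z (H :: real mat)"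
  by (auto simp: Cm_def Gm_def)

lemma dA_path_sigma:
  fixes Z S :: "real mat"
  assumes Z: "Z \<in> carrier_mat n m" and S: "S \<in> carrier_mat m m" and I: "N i \<subseteq> {..<n}" and i: "i < n"
    and Ci: "CNinv Z S s N i \<in> carrier_mat (card (N i)) (card (N i))"
  shows "dA_path Z S (0\<^sub>m m m) s 1 N i = dA_sigma Z S s N i"
proof -
  have si: "{i} \<subseteq> {..<n}" using i by auto
  have R: "submatrix (Gm Z S) {i} (N i) \<in> carrier_mat 1 (card (N i))"
    using submatrix_carrier_mat[OF Gm_carrier[OF Z S] si I] by simp
  show ?thesis
    using R Ci submatrix_zero_mat[OF si I, where 'a=real] submatrix_one_mat[OF I, where 'a=real]
    by (simp add: dA_path_def dA_sigma_def dB_sigma_row_def Gm_zero[OF Z] Cm_zero_one[OF Z]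
        numeral_2_eq_2 assoc_mult_mat[of _ 1 "card (N i)" _ "card (N i)" _ "card (N i)"])
      (intro eq_matI, auto)
qed

lemma dD_path_sigma:
  fixes Z S :: "real mat"
  assumes Z: "Z \<in> carrier_mat n m" and S: "S \<in> carrier_mat m m" and I: "N i \<subseteq> {..<n}" and i: "i < n"
    and Ci: "CNinv Z S s N i \<in> carrier_mat (card (N i)) (card (N i))"
  shows "dD_path Z S (0\<^sub>m m m) s 1 N i = dD_sigma Z S s N i"
proof -
  have si: "{i} \<subseteq> {..<n}" using i by auto
  have "Avec Z S s N i \<in> carrier_mat 1 (card (N i))"
    using submatrix_carrier_mat[OF Gm_carrier[OF Z S] si I] Ci by (simp add: Avec_def)
  then show ?thesis
    using i submatrix_zero_mat[OF I si, where 'a=real]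
    by (simp add: dD_path_def dD_sigma_def dA_path_sigma[OF assms] Gm_zero[OF Z] Cm_zero_one[OF Z])
qed

lemma dA_path_theta:
  fixes Z S H :: "real mat"
  assumes "Z \<in> carrier_mat n m" and "H \<in> carrier_mat m m"
  shows "dA_path Z S H s 0 N i = dA_theta Z S s N H i"
  using assms by (simp add: dA_path_def dA_theta_def Cm_zero_noise Gm_def)

lemma dD_path_theta:
  fixes Z S H :: "real mat"
  assumes "Z \<in> carrier_mat n m" and "H \<in> carrier_mat m m"
  shows "dD_path Z S H s 0 N i = dD_theta Z S s N H i"
  using assms by (simp add: dD_path_def dD_theta_def dA_path_theta Cm_zero_noise Gm_def)

lemma scatter_cong: "(\<And>i. i < n \<Longrightarrow> R i = R' i) \<Longrightarrow> scatter n N R = scatter n N R'"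
  by (auto simp: scatter_def intro!: eq_matI)

lemma dBm_dDi_eq_path:
  fixes Z S :: "real mat"
  assumes Z: "Z \<in> carrier_mat n m" and S: "S \<in> carrier_mat m m"
    and psd: "\<And>x. x \<in> carrier_vec m \<Longrightarrow> 0 \<le> x \<bullet> (S *\<^sub>v x)" and "s > 0"
    and N: "\<And>i. i < n \<Longrightarrow> N i \<subseteq> {..<i}" and dS: "k \<noteq> 1 \<Longrightarrow> dS k \<in> carrier_mat m m"
  defines "S' \<equiv> if k = 1 then 0\<^sub>m m m else dS k" and "s' \<equiv> if k = 1 then 1 else 0"
  shows "dBm Z S s N dS k = scatter n N (\<lambda>i. - dA_path Z S S' s s' N i)"
    and "i < n \<Longrightarrow> dDi Z S s N dS k i = dD_path Z S S' s s' N i"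
proof -
  have I: "N i \<subseteq> {..<n}" if "i < n" for i using N[OF that] that by auto
  have Ci: "CNinv Z S s N i \<in> carrier_mat (card (N i)) (card (N i))" if "i < n" for i
    using CNinv_inverse(1)[where N=N, OF Z S psd \<open>s > 0\<close> I[OF that]] .
  have "dim_row Z = n" using Z by auto
  then show "dBm Z S s N dS k = scatter n N (\<lambda>i. - dA_path Z S S' s s' N i)"
    unfolding dBm_def S'_def s'_def using Z S I Ci dS
    by (auto intro!: scatter_cong simp: dA_path_sigma dA_sigma_def dA_path_theta)
  show "dDi Z S s N dS k i = dD_path Z S S' s s' N i" if "i < n"
    unfolding dDi_def S'_def s'_def using Z S I[OF that] Ci[OF that] dS that
    by (auto simp: dD_path_sigma dD_path_theta)
qed

section \<open>Derivative of the likelihood\<close>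

lemma mat_diag_mult_vec:
  assumes "v \<in> carrier_vec n"
  shows "mat_diag n f *\<^sub>v v = vec n (\<lambda>i. f i * v $ i)"
proof (rule eq_vecI)
  fix i assume "i < dim_vec (vec n (\<lambda>i. f i * v $ i))"
  then have i: "i < n" by simp
  have "(mat_diag n f *\<^sub>v v) $ i = (\<Sum>l\<in>{0..<n}. mat_diag n f $$ (i,l) * v $ l)"
    using assms i by (simp add: scalar_prod_def mat_diag_def)
  also have "\<dots> = (\<Sum>l\<in>{0..<n}. if l = i then f i * v $ i else 0)"
    using i by (intro sum.cong) (auto simp: mat_diag_def)
  finally show "(mat_diag n f *\<^sub>v v) $ i = vec n (\<lambda>i. f i * v $ i) $ i" using i by simp
qed (simp add: mat_diag_def)

lemma minv_mat_diag:
  assumes "\<And>i. i < n \<Longrightarrow> d i \<noteq> (0::real)"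
  shows "minv (mat_diag n d) = mat_diag n (\<lambda>i. 1 / d i)"
proof (rule minv_eqI)
  show "mat_diag n d * mat_diag n (\<lambda>i. 1 / d i) = 1\<^sub>m n"
    unfolding mat_diag_diag using assms by (intro eq_matI) (auto simp: mat_diag_def)
qed auto

lemma DERIV_mult_mat_vec_index:
  assumes B: "has_mat_derivative B dB x nr nc" and r: "r \<in> carrier_vec nc" and i: "i < nr"
  shows "((\<lambda>t. (B t *\<^sub>v r) $ i) has_real_derivative (dB *\<^sub>v r) $ i) (at x)"
proof (rule DERIV_transform_nhds)
  show "((\<lambda>t. \<Sum>j\<in>{0..<nc}. B t $$ (i,j) * r $ j) has_real_derivative (\<Sum>j\<in>{0..<nc}. dB $$ (i,j) * r $ j)) (at x)"
    by (intro DERIV_sum DERIV_cmult_right has_mat_derivativeD(4)[OF B i]) simp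
  show "\<forall>\<^sub>F t in nhds x. (B t *\<^sub>v r) $ i = (\<Sum>j\<in>{0..<nc}. B t $$ (i,j) * r $ j)"
    using has_mat_derivativeD(2)[OF B] by eventually_elim (use i r in \<open>auto simp: scalar_prod_def\<close>)
qed (use i r has_mat_derivativeD(1)[OF B] in \<open>auto simp: scalar_prod_def\<close>)

lemma quadratic_form_minv_mat_diag:
  assumes B: "B \<in> carrier_mat n n" and r: "r \<in> carrier_vec n" and d: "\<And>i. i < n \<Longrightarrow> d i \<noteq> 0"
  shows "r \<bullet> ((transpose_mat B * minv (mat_diag n d) * B) *\<^sub>v r) = (\<Sum>i<n. (B *\<^sub>v r) $ i ^ 2 / d i)"
proof -
  define w where "w = B *\<^sub>v r"
  have w: "w \<in> carrier_vec n" using B r by (simp add: w_def)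
  have "(transpose_mat B * minv (mat_diag n d) * B) *\<^sub>v r = transpose_mat B *\<^sub>v (mat_diag n (\<lambda>i. 1 / d i) *\<^sub>v w)"
    using B r by (simp add: minv_mat_diag[OF d] w_def assoc_mult_mat_vec[of _ n n _ n])
  moreover have "mat_diag n (\<lambda>i. 1 / d i) *\<^sub>v w \<in> carrier_vec n"
    by (rule carrier_vecI) (simp add: mat_diag_def)
  ultimately have "r \<bullet> ((transpose_mat B * minv (mat_diag n d) * B) *\<^sub>v r)
      = w \<bullet> (mat_diag n (\<lambda>i. 1 / d i) *\<^sub>v w)"
    using B r transpose_vec_mult_scalar[of B n n r "mat_diag n (\<lambda>i. 1 / d i) *\<^sub>v w"]
    by (simp add: w_def comm_scalar_prod[of _ n])
  also have "\<dots> = (\<Sum>i<n. w $ i ^ 2 / d i)"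
    using w by (simp add: mat_diag_mult_vec scalar_prod_def power2_eq_square atLeast0LessThan)
  finally show ?thesis by (simp add: w_def)
qed

lemma DERIV_quadratic_form_minv_mat_diag:
  fixes B :: "real \<Rightarrow> real mat" and d :: "real \<Rightarrow> nat \<Rightarrow> real"
  assumes B: "has_mat_derivative B dB x n n"
    and d: "\<And>i. i < n \<Longrightarrow> ((\<lambda>t. d t i) has_real_derivative dd i) (at x)"
    and pos: "\<And>i. i < n \<Longrightarrow> 0 < d x i" and r: "r \<in> carrier_vec n"
  defines "u \<equiv> minv (mat_diag n (d x)) *\<^sub>v (B x *\<^sub>v r)"
  shows "((\<lambda>t. r \<bullet> ((transpose_mat (B t) * minv (mat_diag n (d t)) * B t) *\<^sub>v r)) has_real_derivative
      2 * ((dB *\<^sub>v r) \<bullet> u) - u \<bullet> (mat_diag n dd *\<^sub>v u)) (at x)"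
proof (rule DERIV_transform_nhds)
  let ?w = "\<lambda>t i. (B t *\<^sub>v r) $ i"
  have u: "u = vec n (\<lambda>i. ?w x i / d x i)"
    using has_mat_derivativeD(3)[OF B] r pos
    by (simp add: u_def minv_mat_diag mat_diag_mult_vec less_imp_neq[symmetric])
  have summand: "((\<lambda>t. ?w t i ^ 2 / d t i) has_real_derivative
      2 * (dB *\<^sub>v r) $ i * u $ i - u $ i * (dd i * u $ i)) (at x)" if i: "i < n" for i
  proof -
    have "d x i \<noteq> 0" using pos[OF i] by simp
    with DERIV_divide[OF DERIV_power[OF DERIV_mult_mat_vec_index[OF B r i], of 2] d[OF i]]
    show ?thesis using i by (simp add: u field_simps power2_eq_square)
  qed
  show "((\<lambda>t. \<Sum>i<n. ?w t i ^ 2 / d t i) has_real_derivative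
      2 * ((dB *\<^sub>v r) \<bullet> u) - u \<bullet> (mat_diag n dd *\<^sub>v u)) (at x)"
  proof (rule DERIV_transform_nhds[OF DERIV_sum[of "{..<n}"]])
    show "((\<lambda>t. ?w t i ^ 2 / d t i) has_real_derivative
      2 * (dB *\<^sub>v r) $ i * u $ i - u $ i * (dd i * u $ i)) (at x)" if "i \<in> {..<n}" for i
      using summand that by simp
    have "u \<in> carrier_vec n" by (simp add: u)
    then show "2 * ((dB *\<^sub>v r) \<bullet> u) - u \<bullet> (mat_diag n dd *\<^sub>v u)
        = (\<Sum>i<n. 2 * (dB *\<^sub>v r) $ i * u $ i - u $ i * (dd i * u $ i))"
      by (simp add: scalar_prod_def mat_diag_mult_vec atLeast0LessThan sum_subtractf sum_distrib_left mult.assoc)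
  qed simp
  have "\<forall>\<^sub>F t in nhds x. \<forall>i\<in>{..<n}. d t i \<noteq> 0"
    using d pos by (intro eventually_ball_finite ballI eventually_nonzero_DERIV) (auto simp: less_imp_neq[symmetric])
  then show "\<forall>\<^sub>F t in nhds x. r \<bullet> ((transpose_mat (B t) * minv (mat_diag n (d t)) * B t) *\<^sub>v r)
      = (\<Sum>i<n. ?w t i ^ 2 / d t i)"
    using has_mat_derivativeD(2)[OF B] by eventually_elim (simp add: quadratic_form_minv_mat_diag r)
qed simp

lemma posN_less_card:
  assumes "finite (N i)" and "j \<in> N i"
  shows "posN N i j < card (N i)"
proof -
  have "{j' \<in> N i. j' < j} \<subset> N i" using assms(2) by auto
  then show ?thesis unfolding posN_def by (rule psubset_card_mono[OF assms(1)])
qed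

lemma has_mat_derivative_Bm:
  fixes Z :: "real mat"
  assumes Z: "Z \<in> carrier_mat n m" and Sf: "has_mat_derivative Sf S' x m m"
    and sf: "(sf has_real_derivative s') (at x)"
    and psd: "\<And>v. v \<in> carrier_vec m \<Longrightarrow> 0 \<le> v \<bullet> (Sf x *\<^sub>v v)" and "sf x > 0"
    and N: "\<And>i. i < n \<Longrightarrow> N i \<subseteq> {..<i}"
  shows "has_mat_derivative (\<lambda>t. Bm Z (Sf t) (sf t) N) (scatter n N (\<lambda>i. - dA_path Z (Sf x) S' (sf x) s' N i)) x n n"
  unfolding has_mat_derivative_def
proof (intro conjI allI impI)
  show "scatter n N (\<lambda>i. - dA_path Z (Sf x) S' (sf x) s' N i) \<in> carrier_mat n n"
    by (simp add: scatter_def)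
  show "\<forall>\<^sub>F t in nhds x. Bm Z (Sf t) (sf t) N \<in> carrier_mat n n"
    using Z by (simp add: Bm_def)
  fix i j assume ij: "i < n" "j < n"
  have dZ: "dim_row Z = n" using Z by auto
  have I: "N i \<subseteq> {..<n}" using N[OF ij(1)] ij(1) by auto
  note A = has_mat_derivative_Avec[where N=N and i=i, OF Z Sf sf psd \<open>sf x > 0\<close> I ij(1)]
  show "((\<lambda>t. Bm Z (Sf t) (sf t) N $$ (i,j)) has_real_derivative
      scatter n N (\<lambda>i. - dA_path Z (Sf x) S' (sf x) s' N i) $$ (i,j)) (at x)"
  proof (cases "j \<in> N i")
    case True
    then have "i \<noteq> j" and p: "posN N i j < card (N i)"
      using N[OF ij(1)] posN_less_card[where N=N, OF finite_subset[OF I finite_lessThan] True] by auto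
    then show ?thesis
      using DERIV_minus[OF has_mat_derivativeD(4)[OF A _ p]] ij True has_mat_derivativeD(1)[OF A]
      by (simp add: Bm_def scatter_def dZ)
  next
    case False
    then show ?thesis using ij by (cases "i = j") (simp_all add: Bm_def scatter_def dZ)
  qed
qed

lemma Ltilde_path_derivatives:
  fixes Z :: "real mat"
  assumes Z: "Z \<in> carrier_mat n m" and y: "y \<in> carrier_vec n" and F: "F \<in> carrier_vec n"
    and Sf: "has_mat_derivative Sf S' x m m" and sf: "(sf has_real_derivative s') (at x)"
    and psd: "\<And>v. v \<in> carrier_vec m \<Longrightarrow> 0 \<le> v \<bullet> (Sf x *\<^sub>v v)" and "sf x > 0"
    and N: "\<And>i. i < n \<Longrightarrow> N i \<subseteq> {..<i}"
    and dB: "dB = scatter n N (\<lambda>i. - dA_path Z (Sf x) S' (sf x) s' N i)"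
    and dD: "\<And>i. i < n \<Longrightarrow> dD i = dD_path Z (Sf x) S' (sf x) s' N i"
  shows "((\<lambda>t. Ltilde y F Z (Sf t) (sf t) N) has_real_derivative
      (let r = y - F; u = minv (Dm Z (Sf x) (sf x) N) *\<^sub>v (Bm Z (Sf x) (sf x) N *\<^sub>v r); uk = dB *\<^sub>v r in
        1/2 * (2 * (uk \<bullet> u) - u \<bullet> (mat_diag n dD *\<^sub>v u)) + 1/2 * (\<Sum>i<n. 1 / Dsc Z (Sf x) (sf x) N i * dD i)))
      (at x)"
    and "\<forall>i<n. \<forall>j<n. ((\<lambda>t. Bm Z (Sf t) (sf t) N $$ (i,j)) has_real_derivative dB $$ (i,j)) (at x)"
    and "\<forall>i<n. ((\<lambda>t. Dsc Z (Sf t) (sf t) N i) has_real_derivative dD i) (at x)"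
proof -
  have dZ: "dim_row Z = n" using Z by auto
  have I: "N i \<subseteq> {..<n}" "i \<notin> N i" if "i < n" for i using N[OF that] that by auto
  have B: "has_mat_derivative (\<lambda>t. Bm Z (Sf t) (sf t) N) dB x n n"
    unfolding dB by (rule has_mat_derivative_Bm[OF Z Sf sf psd \<open>sf x > 0\<close> N])
  have D: "((\<lambda>t. Dsc Z (Sf t) (sf t) N i) has_real_derivative dD i) (at x)" if "i < n" for i
    using DERIV_Dsc[where N=N, OF Z Sf sf psd \<open>sf x > 0\<close> I(1)[OF that] that] dD[OF that] by simp
  then show "\<forall>i<n. ((\<lambda>t. Dsc Z (Sf t) (sf t) N i) has_real_derivative dD i) (at x)" by blast
  show "\<forall>i<n. \<forall>j<n. ((\<lambda>t. Bm Z (Sf t) (sf t) N $$ (i,j)) has_real_derivative dB $$ (i,j)) (at x)"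
    using has_mat_derivativeD(4)[OF B] by blast
  have pos: "0 < Dsc Z (Sf x) (sf x) N i" if "i < n" for i
    using Dsc_pos[where N=N, OF Z has_mat_derivativeD(3)[OF Sf] psd \<open>sf x > 0\<close> I(1)[OF that] that I(2)[OF that]] .
  have logs: "((\<lambda>t. \<Sum>i<n. ln (Dsc Z (Sf t) (sf t) N i)) has_real_derivative
      (\<Sum>i<n. 1 / Dsc Z (Sf x) (sf x) N i * dD i)) (at x)"
    by (rule DERIV_sum, rule DERIV_chain2[OF DERIV_ln_divide]) (use D pos in auto)
  have "y - F \<in> carrier_vec n" using y F by simp
  from DERIV_quadratic_form_minv_mat_diag[where d="\<lambda>t i. Dsc Z (Sf t) (sf t) N i", OF B D pos this]
  have quad: "((\<lambda>t. (y - F) \<bullet> ((transpose_mat (Bm Z (Sf t) (sf t) N) * minv (Dm Z (Sf t) (sf t) N)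
        * Bm Z (Sf t) (sf t) N) *\<^sub>v (y - F))) has_real_derivative
      (let u = minv (Dm Z (Sf x) (sf x) N) *\<^sub>v (Bm Z (Sf x) (sf x) N *\<^sub>v (y - F)) in
        2 * ((dB *\<^sub>v (y - F)) \<bullet> u) - u \<bullet> (mat_diag n dD *\<^sub>v u))) (at x)"
    by (simp add: Dm_def dZ Let_def)
  from DERIV_add[OF DERIV_add[OF DERIV_cmult[OF quad, of "1/2"] DERIV_cmult[OF logs, of "1/2"]]
      DERIV_const[of "real n / 2 * ln (2 * pi)"]]
  show "((\<lambda>t. Ltilde y F Z (Sf t) (sf t) N) has_real_derivative
      (let r = y - F; u = minv (Dm Z (Sf x) (sf x) N) *\<^sub>v (Bm Z (Sf x) (sf x) N *\<^sub>v r); uk = dB *\<^sub>v r in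
        1/2 * (2 * (uk \<bullet> u) - u \<bullet> (mat_diag n dD *\<^sub>v u)) + 1/2 * (\<Sum>i<n. 1 / Dsc Z (Sf x) (sf x) N i * dD i)))
      (at x)"
    by (simp add: Ltilde_def dZ Let_def)
qed

theorem proposition1:
  fixes n m q k :: nat and y F :: "real vec" and Z :: "real mat"
    and Sig :: "(nat \<Rightarrow> real) \<Rightarrow> real mat" and dSig :: "nat \<Rightarrow> real mat"
    and th :: "nat \<Rightarrow> real" and N :: "nat \<Rightarrow> nat set"
  assumes y: "y \<in> carrier_vec n" and F: "F \<in> carrier_vec n"
    and Z: "Z \<in> carrier_mat n m"
    and q: "q \<ge> 1" and k: "k \<in> {1..q}"
    and sigma_pos: "th 1 > 0"
    and Sig_carrier: "\<And>t. Sig t \<in> carrier_mat m m"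
    and Sig_dep: "\<And>t t'. (\<forall>j\<in>{2..q}. t j = t' j) \<Longrightarrow> Sig t = Sig t'"
    and Sig_sym: "transpose_mat (Sig th) = Sig th"
    and Sig_psd: "\<And>x. x \<in> carrier_vec m \<Longrightarrow> 0 \<le> x \<bullet> (Sig th *\<^sub>v x)"
    and dSig_carrier: "\<And>l. l \<in> {2..q} \<Longrightarrow> dSig l \<in> carrier_mat m m"
    and Sig_deriv: "\<And>l a b. l \<in> {2..q} \<Longrightarrow> a < m \<Longrightarrow> b < m \<Longrightarrow>
          ((\<lambda>t. Sig (th(l := t)) $$ (a,b)) has_real_derivative (dSig l $$ (a,b))) (at (th l))"
    and N: "\<And>i. i < n \<Longrightarrow> N i \<subseteq> {..<i}"
  shows "((\<lambda>t. Ltilde y F Z (Sig (th(k := t))) ((th(k := t)) 1) N)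
            has_real_derivative gradL y F Z (Sig th) (th 1) N dSig k) (at (th k))
      \<and> (\<forall>i<n. \<forall>j<n.
          ((\<lambda>t. Bm Z (Sig (th(k := t))) ((th(k := t)) 1) N $$ (i,j))
            has_real_derivative dBm Z (Sig th) (th 1) N dSig k $$ (i,j)) (at (th k)))
      \<and> (\<forall>i<n.
          ((\<lambda>t. Dsc Z (Sig (th(k := t))) ((th(k := t)) 1) N i)
            has_real_derivative dDi Z (Sig th) (th 1) N dSig k i) (at (th k)))"
proof -
  define S' where "S' = (if k = 1 then 0\<^sub>m m m else dSig k)"
  define s' where "s' = (if k = 1 then 1 else 0 :: real)"
  have Sig_path: "has_mat_derivative (\<lambda>t. Sig (th(k := t))) S' (th k) m m"
  proof (cases "k = 1")
    case True
    then have "Sig (th(k := t)) = Sig th" for t by (intro Sig_dep) auto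
    then show ?thesis using True Sig_carrier by (simp add: S'_def has_mat_derivative_const)
  next
    case False
    with k have "k \<in> {2..q}" by auto
    then show ?thesis
      using False Sig_carrier dSig_carrier Sig_deriv unfolding has_mat_derivative_def S'_def by auto
  qed
  have sigma_path: "((\<lambda>t. (th(k := t)) 1) has_real_derivative s') (at (th k))"
    by (cases "k = 1") (simp_all add: s'_def)
  have "dSig k \<in> carrier_mat m m" if "k \<noteq> 1" using k that by (intro dSig_carrier) auto
  note dBm_dDi = dBm_dDi_eq_path[where N=N and dS=dSig and k=k, OF Z Sig_carrier[of th] Sig_psd sigma_pos N this, folded S'_def s'_def]
  note path_derivatives = Ltilde_path_derivatives[OF Z y F Sig_path sigma_path, unfolded fun_upd_triv]
  from path_derivatives[OF Sig_psd sigma_pos N dBm_dDi] Z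
  show ?thesis unfolding gradL_def dDm_def by auto
qed

end
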